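(* Fix a real number $z\geq 2$. The function $q\mapsto\beta_c(q,z)$ (defined for integers $q\geq 2$) is increasing.
   Context: For an integer $q\geq 2$, real $z\geq 2$, $\beta\geq0$ and $N\in\mathbb{N}$, the generalized mean-field Potts measure is $\pi^N_{\beta,q,z}(\xi)=\frac{1}{Z}\exp\big(\frac{N\beta}{z}\sum_{i=1}^q (L_N^\xi(i))^z\big)$ on $\{1,\dots,q\}^N$, with $L_N^\xi=\frac1N\sum_{j=1}^N\delta_{\xi_j}$ the empirical distribution. The critical inverse temperature $\beta_c(q,z)>0$ is the (unique) value such that the weak limit of $\pi^N_{\beta,q,z}(L_N\in\cdot)$ as $N\to\infty$ is $\delta_{(1/q,\dots,1/q)}$ for $\beta<\beta_c(q,z)$ and is the mixture $\frac1q\sum_{i=1}^q\delta_{u e_i+\frac{1-u}{q}(1,\dots,1)}$ with $u=u(\beta,q,z)>0$ for $\beta>\beta_c(q,z)$; equivalently, $\beta_c(q,z)$ is the threshold such that the free energy $\Gamma_{\beta,q,z}(\nu)=-\frac{\beta}{z}\sum_{i=1}^q\nu_i^z+\sum_{i=1}^q\nu_i\log(q\nu_i)$ on probability vectors $\nu$ has the uniform vector as its unique global minimizer for $\beta<\beta_c(q,z)$ and not for $\beta>\beta_c(q,z)$. *)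

theory Defs
  imports Complex_Main
begin

text \<open>Probability vectors on \<open>{1,...,q}\<close>, encoded as functions on \<open>{0..<q}\<close>
  that vanish outside this index set.\<close>
definition prob_vectors :: "nat \<Rightarrow> (nat \<Rightarrow> real) set" where
  "prob_vectors q = {\<nu>. (\<forall>i<q. 0 \<le> \<nu> i) \<and> (\<forall>i\<ge>q. \<nu> i = 0) \<and> (\<Sum>i<q. \<nu> i) = 1}"

definition uniform_vec :: "nat \<Rightarrow> nat \<Rightarrow> real" where
  "uniform_vec q = (\<lambda>i. if i < q then 1 / real q else 0)"

text \<open>Free energy; note \<open>0 * ln 0 = 0\<close> and \<open>0 powr z = 0\<close> in Isabelle, matching the
  convention \<open>0 log 0 = 0\<close>.\<close>
definition Gamma :: "real \<Rightarrow> nat \<Rightarrow> real \<Rightarrow> (nat \<Rightarrow> real) \<Rightarrow> real" where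
  "Gamma \<beta> q z \<nu> = - (\<beta> / z) * (\<Sum>i<q. \<nu> i powr z) + (\<Sum>i<q. \<nu> i * ln (real q * \<nu> i))"

definition uniform_unique_min :: "real \<Rightarrow> nat \<Rightarrow> real \<Rightarrow> bool" where
  "uniform_unique_min \<beta> q z \<longleftrightarrow>
     (\<forall>\<nu>\<in>prob_vectors q. \<nu> \<noteq> uniform_vec q \<longrightarrow> Gamma \<beta> q z (uniform_vec q) < Gamma \<beta> q z \<nu>)"

definition beta_c :: "nat \<Rightarrow> real \<Rightarrow> real" where
  "beta_c q z = (THE b. b > 0 \<and> (\<forall>\<beta>. 0 \<le> \<beta> \<and> \<beta> < b \<longrightarrow> uniform_unique_min \<beta> q z)
                               \<and> (\<forall>\<beta>. \<beta> > b \<longrightarrow> \<not> uniform_unique_min \<beta> q z))"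

end

theory Submission
  imports Defs "HOL-Combinatorics.Permutations"
begin

text \<open>Subtracting the free energy of the uniform vector gives
  \<open>\<Gamma>(\<nu>) - \<Gamma>(uniform) = KL(\<nu>) - \<beta>/z * D(\<nu>)\<close>, where \<open>KL\<close> (\<open>rel_entropy\<close>) is the relative
  entropy to the uniform vector and \<open>D(\<nu>) = \<Sum>\<^sub>i \<nu>\<^sub>i^z - q^(1-z) \<ge> 0\<close> (\<open>power_excess\<close>). Hence
  \<open>\<beta>\<^sub>c(q,z)\<close> is the infimum \<open>B(q)\<close> (\<open>crit_ratio\<close>) of \<open>z * KL / D\<close> over the probability vectors
  with \<open>D > 0\<close>, and perturbing the uniform vector shows \<open>B(q) \<le> q^(z-1) / (z-1)\<close>.

  For \<open>q + 1\<close> states, move the smallest coordinate \<open>t \<le> 1/(q+1)\<close> of \<open>\<nu>\<close> to the end and condition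
  on the other states, giving \<open>\<mu>\<close>. Then \<open>KL\<close> and \<open>D\<close> split into the contribution of the block vector
  \<open>((1-t)/q, \<dots>, (1-t)/q, t)\<close> plus \<open>(1-t) KL(\<mu>)\<close> and \<open>(1-t)^z D(\<mu>)\<close>. Second-order Taylor
  bounds give the block part a ratio of at least \<open>q^(z-1) (q+2) / ((z-1)(q+1)) > B(q)\<close>, the
  conditioned part has ratio at least \<open>B(q)\<close>, and since \<open>(1-t)^z \<le> (1-t)^2\<close> this leaves a
  margin \<open>\<epsilon> > 0\<close> independent of \<open>\<nu>\<close>, so that \<open>B(q+1) \<ge> B(q) + \<epsilon>\<close>.\<close>

section \<open>Second-order Taylor bounds\<close>

lemma taylor_second_order:
  fixes f f' f'' :: "real \<Rightarrow> real"
  assumes f': "\<And>y. lo \<le> y \<Longrightarrow> y \<le> hi \<Longrightarrow> (f has_real_derivative f' y) (at y)"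
    and f'': "\<And>y. lo \<le> y \<Longrightarrow> y \<le> hi \<Longrightarrow> (f' has_real_derivative f'' y) (at y)"
    and "lo \<le> c" "c \<le> hi" "lo \<le> x" "x \<le> hi" "x \<noteq> c"
  obtains \<xi> where "min x c < \<xi>" "\<xi> < max x c" "f x = f c + f' c * (x - c) + f'' \<xi> / 2 * (x - c)^2"
proof -
  define diff where "diff = (\<lambda>m::nat. if m = 0 then f else if m = 1 then f' else f'')"
  have "\<forall>m t. m < 2 \<and> lo \<le> t \<and> t \<le> hi \<longrightarrow> DERIV (diff m) t :> diff (Suc m) t"
    using f' f'' by (auto simp: diff_def less_2_cases_iff)
  moreover have "diff 0 = f" by (simp add: diff_def)
  ultimately obtain \<xi> where \<xi>: "if x < c then x < \<xi> \<and> \<xi> < c else c < \<xi> \<and> \<xi> < x"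
      "f x = (\<Sum>m<2. diff m c / fact m * (x - c)^m) + diff 2 \<xi> / fact 2 * (x - c)^2"
    using Taylor[of 2 diff f lo hi c x] assms(3-7) by auto
  have "(\<Sum>m<2. diff m c / fact m * (x - c)^m) = f c + f' c * (x - c)"
    by (simp add: numeral_2_eq_2 diff_def)
  with \<xi> assms(7) show thesis
    by (intro that[of \<xi>]) (auto simp: diff_def split: if_splits)
qed

definition powr_bregman :: "real \<Rightarrow> real \<Rightarrow> real \<Rightarrow> real" where
  "powr_bregman z a x = x powr z - a powr z - z * a powr (z - 1) * (x - a)"

lemma powr_bregman_taylor:
  assumes "a > 0" "x > 0"
  obtains \<xi> where "min x a \<le> \<xi>" "\<xi> \<le> max x a"
    "powr_bregman z a x = z * (z - 1) / 2 * \<xi> powr (z - 2) * (x - a)^2"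
proof (cases "x = a")
  case True
  then show thesis by (intro that[of a]) (simp_all add: powr_bregman_def)
next
  case False
  have pos: "y > 0" if "min x a \<le> y" for y
    using that assms by linarith
  have d1: "((\<lambda>y. y powr z) has_real_derivative z * y powr (z - 1)) (at y)"
    if "min x a \<le> y" "y \<le> max x a" for y
    using pos[OF that(1)] by (intro has_real_derivative_powr) auto
  have d2: "((\<lambda>y. z * y powr (z - 1)) has_real_derivative z * (z - 1) * y powr (z - 2)) (at y)"
    if "min x a \<le> y" "y \<le> max x a" for y
    using pos[OF that(1)] by (auto intro!: derivative_eq_intros simp: algebra_simps)
  obtain \<xi> where "min x a < \<xi>" "\<xi> < max x a"
      "x powr z = a powr z + z * a powr (z - 1) * (x - a) + z * (z - 1) * \<xi> powr (z - 2) / 2 * (x - a)^2"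
    by (rule taylor_second_order[where lo = "min x a" and hi = "max x a", OF d1 d2])
      (use False in auto)
  then show thesis by (intro that[of \<xi>]) (auto simp: powr_bregman_def)
qed

lemma powr_bregman_lower:
  assumes "z \<ge> 2" "a > 0" "x > 0"
  shows "z * (z - 1) / 2 * min x a powr (z - 2) * (x - a)^2 \<le> powr_bregman z a x"
proof -
  obtain \<xi> where \<xi>: "min x a \<le> \<xi>" "\<xi> \<le> max x a"
      "powr_bregman z a x = z * (z - 1) / 2 * \<xi> powr (z - 2) * (x - a)^2"
    using powr_bregman_taylor[OF assms(2,3)] .
  have "min x a powr (z - 2) \<le> \<xi> powr (z - 2)"
    using \<xi> assms by (intro powr_mono2) auto
  then show ?thesis
    unfolding \<xi>(3) using assms(1) by (simp add: mult_right_mono mult_left_mono)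
qed

lemma powr_bregman_at_zero:
  assumes "a > 0"
  shows "powr_bregman z a 0 = (z - 1) * a powr z"
proof -
  have "a powr (z - 1) * a = a powr z"
    using assms by (simp add: powr_diff)
  moreover have "powr_bregman z a 0 = z * (a powr (z - 1) * a) - a powr z"
    by (simp add: powr_bregman_def algebra_simps)
  ultimately show ?thesis by (simp add: algebra_simps)
qed

lemma powr_bregman_upper:
  assumes "z \<ge> 2" "a > 0" "x \<ge> 0"
  shows "powr_bregman z a x \<le> z * (z - 1) / 2 * max x a powr (z - 2) * (x - a)^2"
proof (cases "x = 0")
  case True
  have "z - 1 \<le> z * (z - 1) / 2"
    using mult_left_mono[of 2 z "z - 1"] assms(1) by (simp add: algebra_simps)
  then have "(z - 1) * a powr z \<le> z * (z - 1) / 2 * a powr z"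
    by (rule mult_right_mono) simp
  then have "powr_bregman z a x \<le> z * (z - 1) / 2 * a powr z"
    using True powr_bregman_at_zero[OF assms(2)] by simp
  also have "a powr z = a powr (z - 2) * a^2"
    using assms(2) by (simp add: powr_diff power2_eq_square)
  finally show ?thesis
    using True assms(2) by (simp add: max_def mult.assoc)
next
  case False
  obtain \<xi> where \<xi>: "min x a \<le> \<xi>" "\<xi> \<le> max x a"
      "powr_bregman z a x = z * (z - 1) / 2 * \<xi> powr (z - 2) * (x - a)^2"
    by (rule powr_bregman_taylor[OF assms(2), of x]) (use False assms(3) in auto)
  have "\<xi> powr (z - 2) \<le> max x a powr (z - 2)"
    using \<xi> assms False by (intro powr_mono2) auto
  then show ?thesis
    unfolding \<xi>(3) using assms(1) by (simp add: mult_right_mono mult_left_mono)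
qed

lemma powr_bregman_nonneg:
  assumes "z \<ge> 2" "a > 0" "x \<ge> 0"
  shows "0 \<le> powr_bregman z a x"
proof (cases "x = 0")
  case True
  then show ?thesis
    using assms by (simp add: powr_bregman_at_zero)
next
  case False
  then have "0 \<le> z * (z - 1) / 2 * min x a powr (z - 2) * (x - a)^2"
    using assms(1) by simp
  also have "\<dots> \<le> powr_bregman z a x"
    using False assms by (intro powr_bregman_lower) auto
  finally show ?thesis .
qed

definition entropy_gap :: "real \<Rightarrow> real" where
  "entropy_gap x = x * ln x - x + 1"

lemma entropy_gap_taylor:
  assumes "x > 0"
  obtains \<xi> where "min x 1 \<le> \<xi>" "\<xi> \<le> max x 1" "entropy_gap x = (x - 1)^2 / (2 * \<xi>)"
proof (cases "x = 1")
  case True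
  then show thesis by (intro that[of 1]) (simp_all add: entropy_gap_def)
next
  case False
  have pos: "y > 0" if "min x 1 \<le> y" for y
    using that assms by linarith
  have d1: "(entropy_gap has_real_derivative ln y) (at y)" if "min x 1 \<le> y" "y \<le> max x 1" for y
    using pos[OF that(1)] unfolding entropy_gap_def
    by (auto intro!: derivative_eq_intros simp: field_simps)
  have d2: "(ln has_real_derivative 1 / y) (at y)" if "min x 1 \<le> y" "y \<le> max x 1" for y
    using pos[OF that(1)] by (auto intro!: derivative_eq_intros simp: field_simps)
  obtain \<xi> where "min x 1 < \<xi>" "\<xi> < max x 1"
      "entropy_gap x = entropy_gap 1 + ln 1 * (x - 1) + 1 / \<xi> / 2 * (x - 1)^2"
    by (rule taylor_second_order[where lo = "min x 1" and hi = "max x 1", OF d1 d2])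
      (use False in auto)
  then show thesis by (intro that[of \<xi>]) (auto simp: entropy_gap_def)
qed

lemma entropy_gap_lower:
  assumes "0 \<le> x" "x \<le> X" "1 \<le> X"
  shows "(x - 1)^2 / (2 * X) \<le> entropy_gap x"
proof (cases "x = 0")
  case True
  then show ?thesis using assms by (simp add: entropy_gap_def field_simps)
next
  case False
  obtain \<xi> where \<xi>: "min x 1 \<le> \<xi>" "\<xi> \<le> max x 1" "entropy_gap x = (x - 1)^2 / (2 * \<xi>)"
    by (rule entropy_gap_taylor[of x]) (use False assms(1) in auto)
  moreover have "\<xi> > 0" "\<xi> \<le> X"
    using \<xi> False assms by auto
  ultimately show ?thesis by (simp add: frac_le)
qed

lemma entropy_gap_upper:
  assumes "0 < m" "m \<le> x" "m \<le> 1"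
  shows "entropy_gap x \<le> (x - 1)^2 / (2 * m)"
proof -
  obtain \<xi> where \<xi>: "min x 1 \<le> \<xi>" "\<xi> \<le> max x 1" "entropy_gap x = (x - 1)^2 / (2 * \<xi>)"
    by (rule entropy_gap_taylor[of x]) (use assms in auto)
  then show ?thesis using assms by (simp add: frac_le)
qed

section \<open>Relative entropy and power excess\<close>

definition rel_entropy :: "nat \<Rightarrow> (nat \<Rightarrow> real) \<Rightarrow> real" where
  "rel_entropy q \<nu> = (\<Sum>i<q. \<nu> i * ln (real q * \<nu> i))"

definition power_excess :: "nat \<Rightarrow> real \<Rightarrow> (nat \<Rightarrow> real) \<Rightarrow> real" where
  "power_excess q z \<nu> = (\<Sum>i<q. \<nu> i powr z) - real q * (1 / real q) powr z"

definition sqdist_uniform :: "nat \<Rightarrow> (nat \<Rightarrow> real) \<Rightarrow> real" where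
  "sqdist_uniform q \<nu> = (\<Sum>i<q. (\<nu> i - 1 / real q)^2)"

lemma Gamma_minus_uniform:
  assumes "q > 0"
  shows "Gamma \<beta> q z \<nu> - Gamma \<beta> q z (uniform_vec q) = rel_entropy q \<nu> - \<beta> / z * power_excess q z \<nu>"
proof -
  have "(\<Sum>i<q. uniform_vec q i powr z) = real q * (1 / real q) powr z"
    by (simp add: uniform_vec_def)
  moreover have "(\<Sum>i<q. uniform_vec q i * ln (real q * uniform_vec q i)) = 0"
    using assms by (simp add: uniform_vec_def)
  ultimately show ?thesis
    unfolding Gamma_def rel_entropy_def power_excess_def by (simp add: algebra_simps)
qed

lemma prob_vectors_sum: "\<nu> \<in> prob_vectors q \<Longrightarrow> (\<Sum>i<q. \<nu> i) = 1"
  by (simp add: prob_vectors_def)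

lemma prob_vectors_nonneg: "\<nu> \<in> prob_vectors q \<Longrightarrow> 0 \<le> \<nu> i"
  by (cases "i < q") (simp_all add: prob_vectors_def)

lemma prob_vectors_le_one:
  assumes "\<nu> \<in> prob_vectors q"
  shows "\<nu> i \<le> 1"
proof (cases "i < q")
  case True
  then have "\<nu> i \<le> (\<Sum>j<q. \<nu> j)"
    using assms by (intro member_le_sum) (auto intro: prob_vectors_nonneg)
  then show ?thesis using assms by (simp add: prob_vectors_sum)
next
  case False
  then show ?thesis using assms by (simp add: prob_vectors_def)
qed

lemma sqdist_uniform_pos:
  assumes "\<nu> \<in> prob_vectors q" "\<nu> \<noteq> uniform_vec q"
  shows "sqdist_uniform q \<nu> > 0"
proof -
  obtain i where i: "i < q" "\<nu> i \<noteq> 1 / real q"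
  proof (rule ccontr)
    assume "\<not> thesis"
    with that have "\<forall>i<q. \<nu> i = 1 / real q" by blast
    then have "\<nu> = uniform_vec q"
      using assms(1) by (auto simp: uniform_vec_def prob_vectors_def fun_eq_iff)
    with assms(2) show False by simp
  qed
  then have "0 < (\<nu> i - 1 / real q)^2" by simp
  also have "\<dots> \<le> sqdist_uniform q \<nu>"
    unfolding sqdist_uniform_def using i by (intro member_le_sum) auto
  finally show ?thesis .
qed

lemma rel_entropy_eq_entropy_gap:
  assumes "\<nu> \<in> prob_vectors q" "q > 0"
  shows "rel_entropy q \<nu> = (\<Sum>i<q. entropy_gap (real q * \<nu> i)) / real q"
proof -
  have "(\<Sum>i<q. entropy_gap (real q * \<nu> i))
      = real q * (\<Sum>i<q. \<nu> i * ln (real q * \<nu> i)) - real q * (\<Sum>i<q. \<nu> i) + real q"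
    unfolding entropy_gap_def by (simp add: sum.distrib sum_subtractf sum_distrib_left algebra_simps)
  then show ?thesis
    using assms by (simp add: rel_entropy_def prob_vectors_sum)
qed

lemma power_excess_eq_bregman:
  assumes "\<nu> \<in> prob_vectors q" "q > 0"
  shows "power_excess q z \<nu> = (\<Sum>i<q. powr_bregman z (1 / real q) (\<nu> i))"
proof -
  have "(\<Sum>i<q. \<nu> i - 1 / real q) = 0"
    using assms by (simp add: sum_subtractf prob_vectors_sum)
  then have "(\<Sum>i<q. z * (1 / real q) powr (z - 1) * (\<nu> i - 1 / real q)) = 0"
    by (simp add: sum_distrib_left[symmetric])
  then show ?thesis
    unfolding power_excess_def powr_bregman_def by (simp add: sum_subtractf)
qed

lemma rel_entropy_ge_sqdist:
  assumes "\<nu> \<in> prob_vectors q" "q > 0"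
  shows "sqdist_uniform q \<nu> / 2 \<le> rel_entropy q \<nu>"
proof -
  have "(real q * \<nu> i - 1)^2 / (2 * real q) \<le> entropy_gap (real q * \<nu> i)" if "i < q" for i
    using assms prob_vectors_nonneg[OF assms(1)] prob_vectors_le_one[OF assms(1)]
    by (intro entropy_gap_lower) (auto intro: mult_left_le)
  moreover have "(real q * \<nu> i - 1)^2 / (2 * real q) = real q * ((\<nu> i - 1 / real q)^2 / 2)" for i
    using assms(2) by (simp add: field_simps power2_eq_square)
  ultimately have "real q * (sqdist_uniform q \<nu> / 2) \<le> (\<Sum>i<q. entropy_gap (real q * \<nu> i))"
    unfolding sqdist_uniform_def sum_divide_distrib sum_distrib_left by (intro sum_mono) auto
  then show ?thesis
    using assms by (simp add: rel_entropy_eq_entropy_gap field_simps)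
qed

lemma rel_entropy_le_sqdist:
  assumes "\<nu> \<in> prob_vectors q" "q > 0" "0 < r" "r \<le> 1" "\<And>i. i < q \<Longrightarrow> r / real q \<le> \<nu> i"
  shows "rel_entropy q \<nu> \<le> real q / (2 * r) * sqdist_uniform q \<nu>"
proof -
  have "entropy_gap (real q * \<nu> i) \<le> (real q * \<nu> i - 1)^2 / (2 * r)" if "i < q" for i
    using assms(2-4) assms(5)[OF that] by (intro entropy_gap_upper) (auto simp: field_simps)
  moreover have "(real q * \<nu> i - 1)^2 / (2 * r) = real q * (real q / (2 * r) * (\<nu> i - 1 / real q)^2)" for i
  proof -
    have "real q * \<nu> i - 1 = real q * (\<nu> i - 1 / real q)"
      using assms(2) by (simp add: field_simps)
    then show ?thesis by (simp add: power_mult_distrib power2_eq_square)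
  qed
  ultimately have "(\<Sum>i<q. entropy_gap (real q * \<nu> i)) \<le> real q * (real q / (2 * r) * sqdist_uniform q \<nu>)"
    unfolding sqdist_uniform_def sum_distrib_left by (intro sum_mono) auto
  then show ?thesis
    using assms by (simp add: rel_entropy_eq_entropy_gap field_simps)
qed

lemma rel_entropy_pos:
  assumes "\<nu> \<in> prob_vectors q" "q > 0" "\<nu> \<noteq> uniform_vec q"
  shows "rel_entropy q \<nu> > 0"
  using rel_entropy_ge_sqdist[OF assms(1,2)] sqdist_uniform_pos[OF assms(1,3)] by linarith

lemma power_excess_le_sqdist:
  assumes "\<nu> \<in> prob_vectors q" "q > 0" "z \<ge> 2"
  shows "power_excess q z \<nu> \<le> z * (z - 1) / 2 * sqdist_uniform q \<nu>"
proof -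
  have "powr_bregman z (1 / real q) (\<nu> i) \<le> z * (z - 1) / 2 * (\<nu> i - 1 / real q)^2" for i
  proof -
    have "max (\<nu> i) (1 / real q) powr (z - 2) \<le> 1 powr (z - 2)"
      using prob_vectors_nonneg[OF assms(1)] prob_vectors_le_one[OF assms(1)] assms(2,3)
      by (intro powr_mono2) (auto simp: le_max_iff_disj)
    then have "z * (z - 1) / 2 * max (\<nu> i) (1 / real q) powr (z - 2) * (\<nu> i - 1 / real q)^2
        \<le> z * (z - 1) / 2 * (\<nu> i - 1 / real q)^2"
      using assms(3) by (simp add: mult_right_mono mult_left_le)
    moreover have "powr_bregman z (1 / real q) (\<nu> i)
        \<le> z * (z - 1) / 2 * max (\<nu> i) (1 / real q) powr (z - 2) * (\<nu> i - 1 / real q)^2"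
      using assms(2) by (intro powr_bregman_upper assms(3) prob_vectors_nonneg[OF assms(1)]) simp
    ultimately show ?thesis by linarith
  qed
  then show ?thesis
    unfolding power_excess_eq_bregman[OF assms(1,2)] sqdist_uniform_def sum_distrib_left
    by (intro sum_mono)
qed

lemma power_excess_ge_sqdist:
  assumes "\<nu> \<in> prob_vectors q" "q > 0" "z \<ge> 2" "0 < m" "m \<le> 1 / real q"
    and "\<And>i. i < q \<Longrightarrow> m \<le> \<nu> i"
  shows "z * (z - 1) / 2 * m powr (z - 2) * sqdist_uniform q \<nu> \<le> power_excess q z \<nu>"
proof -
  have "z * (z - 1) / 2 * m powr (z - 2) * (\<nu> i - 1 / real q)^2 \<le> powr_bregman z (1 / real q) (\<nu> i)"
    if "i < q" for i
  proof -
    have "m powr (z - 2) \<le> min (\<nu> i) (1 / real q) powr (z - 2)"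
      using assms that by (intro powr_mono2) auto
    then have "z * (z - 1) / 2 * m powr (z - 2) * (\<nu> i - 1 / real q)^2
        \<le> z * (z - 1) / 2 * min (\<nu> i) (1 / real q) powr (z - 2) * (\<nu> i - 1 / real q)^2"
      using assms(3) by (simp add: mult_right_mono mult_left_mono)
    also have "\<dots> \<le> powr_bregman z (1 / real q) (\<nu> i)"
      using assms that by (intro powr_bregman_lower) (auto intro: less_le_trans[of 0 m])
    finally show ?thesis .
  qed
  then show ?thesis
    unfolding power_excess_eq_bregman[OF assms(1,2)] sqdist_uniform_def sum_distrib_left
    by (intro sum_mono) auto
qed

lemma power_excess_nonneg:
  assumes "\<nu> \<in> prob_vectors q" "q > 0" "z \<ge> 2"
  shows "0 \<le> power_excess q z \<nu>"
  unfolding power_excess_eq_bregman[OF assms(1,2)]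
  using assms by (intro sum_nonneg powr_bregman_nonneg) (auto intro: prob_vectors_nonneg)

lemma power_excess_le_one:
  assumes "\<nu> \<in> prob_vectors q" "z \<ge> 2"
  shows "power_excess q z \<nu> \<le> 1"
proof -
  have "\<nu> i powr z \<le> \<nu> i" for i
  proof -
    have "\<nu> i powr z \<le> \<nu> i powr 1"
      using assms prob_vectors_nonneg[OF assms(1)] prob_vectors_le_one[OF assms(1)]
      by (intro powr_mono') auto
    then show ?thesis using prob_vectors_nonneg[OF assms(1), of i] by (cases "\<nu> i = 0") auto
  qed
  then have "(\<Sum>i<q. \<nu> i powr z) \<le> 1"
    using sum_mono[of "{..<q}"] prob_vectors_sum[OF assms(1)] by metis
  then show ?thesis
    unfolding power_excess_def by (smt (verit) mult_nonneg_nonneg of_nat_0_le_iff powr_ge_zero)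
qed

section \<open>The critical inverse temperature as an infimum of ratios\<close>

definition energy_ratios :: "nat \<Rightarrow> real \<Rightarrow> real set" where
  "energy_ratios q z =
     {z * rel_entropy q \<nu> / power_excess q z \<nu> | \<nu>. \<nu> \<in> prob_vectors q \<and> power_excess q z \<nu> > 0}"

definition crit_ratio :: "nat \<Rightarrow> real \<Rightarrow> real" where
  "crit_ratio q z = Inf (energy_ratios q z)"

lemma power_excess_le_rel_entropy:
  assumes "\<nu> \<in> prob_vectors q" "q > 0" "z \<ge> 2"
  shows "power_excess q z \<nu> \<le> (z - 1) * (z * rel_entropy q \<nu>)"
proof -
  have "power_excess q z \<nu> \<le> z * (z - 1) * (sqdist_uniform q \<nu> / 2)"
    using power_excess_le_sqdist[OF assms] by simp
  also have "\<dots> \<le> z * (z - 1) * rel_entropy q \<nu>"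
    using rel_entropy_ge_sqdist[OF assms(1,2)] assms(3) by (intro mult_left_mono) auto
  finally show ?thesis by (simp add: algebra_simps)
qed

lemma energy_ratios_ge:
  assumes "q > 0" "z \<ge> 2" "x \<in> energy_ratios q z"
  shows "1 / (z - 1) \<le> x"
proof -
  obtain \<nu> where \<nu>: "\<nu> \<in> prob_vectors q" "power_excess q z \<nu> > 0"
      "x = z * rel_entropy q \<nu> / power_excess q z \<nu>"
    using assms(3) unfolding energy_ratios_def by blast
  have "power_excess q z \<nu> / (z - 1) \<le> z * rel_entropy q \<nu>"
    using power_excess_le_rel_entropy[OF \<nu>(1) assms(1,2)] assms(2)
    by (subst pos_divide_le_eq) (simp_all add: mult.commute)
  then show ?thesis
    using \<nu>(2,3) by (simp add: le_divide_eq)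
qed

lemma bdd_below_energy_ratios: "q > 0 \<Longrightarrow> z \<ge> 2 \<Longrightarrow> bdd_below (energy_ratios q z)"
  using energy_ratios_ge by (meson bdd_below.I)

lemma crit_ratio_le_ratio:
  assumes "q > 0" "z \<ge> 2" "\<nu> \<in> prob_vectors q" "power_excess q z \<nu> > 0"
  shows "crit_ratio q z \<le> z * rel_entropy q \<nu> / power_excess q z \<nu>"
  unfolding crit_ratio_def using assms bdd_below_energy_ratios
  by (intro cInf_lower) (auto simp: energy_ratios_def)

lemma perturbed_uniform:
  assumes "q \<ge> 2" "0 < r" "r < 1"
  obtains \<nu> where "\<nu> \<in> prob_vectors q" "\<nu> \<noteq> uniform_vec q" "\<And>i. i < q \<Longrightarrow> r / real q \<le> \<nu> i"
proof -
  define \<epsilon> where "\<epsilon> = (1 - r) / real q"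
  define \<nu> where "\<nu> = (\<lambda>i. if i < q then 1 / real q + (if i = 0 then \<epsilon> else 0) - (if i = 1 then \<epsilon> else 0) else 0)"
  have \<epsilon>: "0 < \<epsilon>" "1 / real q - \<epsilon> = r / real q"
    using assms by (auto simp: \<epsilon>_def field_simps)
  have lower: "r / real q \<le> \<nu> i" if "i < q" for i
    using that \<epsilon> by (auto simp: \<nu>_def)
  have "(\<Sum>i<q. \<nu> i) = (\<Sum>i<q. 1 / real q) + (\<Sum>i<q. if i = 0 then \<epsilon> else 0) - (\<Sum>i<q. if i = 1 then \<epsilon> else 0)"
    by (simp add: \<nu>_def sum.distrib sum_subtractf)
  also have "\<dots> = 1" using assms(1) by simp
  finally have "(\<Sum>i<q. \<nu> i) = 1" .
  moreover have "0 \<le> \<nu> i" if "i < q" for i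
    using lower[OF that] assms(2) by (smt (verit) divide_nonneg_nonneg of_nat_0_le_iff)
  ultimately have "\<nu> \<in> prob_vectors q"
    unfolding prob_vectors_def by (auto simp: \<nu>_def)
  moreover have "\<nu> \<noteq> uniform_vec q"
    using \<epsilon> assms(1) by (auto simp: \<nu>_def uniform_vec_def fun_eq_iff dest: spec[of _ 0])
  ultimately show thesis using lower that by blast
qed

lemma ratio_near_uniform:
  assumes \<nu>: "\<nu> \<in> prob_vectors q" "\<nu> \<noteq> uniform_vec q" "\<And>i. i < q \<Longrightarrow> r / real q \<le> \<nu> i"
    and "q > 0" "z \<ge> 2" "0 < r" "r \<le> 1"
  shows "power_excess q z \<nu> > 0"
    and "(z - 1) * r powr (z - 1) * (z * rel_entropy q \<nu>) \<le> real q powr (z - 1) * power_excess q z \<nu>"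
proof -
  define S where "S = sqdist_uniform q \<nu>"
  have S: "S > 0" unfolding S_def by (rule sqdist_uniform_pos[OF \<nu>(1,2)])
  have lower: "z * (z - 1) / 2 * (r / real q) powr (z - 2) * S \<le> power_excess q z \<nu>"
    unfolding S_def using assms by (intro power_excess_ge_sqdist) (auto simp: divide_right_mono)
  moreover have "0 < z * (z - 1) / 2 * (r / real q) powr (z - 2) * S"
    using assms S by simp
  ultimately show "power_excess q z \<nu> > 0" by linarith
  have r: "r powr (z - 1) = r powr (z - 2) * r"
    using powr_add[of r "z - 2" 1] assms(6) by simp
  have q: "real q powr (z - 1) = real q powr (z - 2) * real q"
    using powr_add[of "real q" "z - 2" 1] assms(4) by simp
  have "(z - 1) * r powr (z - 1) * (z * rel_entropy q \<nu>)
      \<le> (z - 1) * r powr (z - 1) * (z * (real q / (2 * r) * S))"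
    unfolding S_def using assms by (intro mult_left_mono rel_entropy_le_sqdist) auto
  also have "\<dots> = real q powr (z - 1) * (z * (z - 1) / 2 * (r / real q) powr (z - 2) * S)"
    using assms by (simp add: r q powr_divide field_simps)
  also have "\<dots> \<le> real q powr (z - 1) * power_excess q z \<nu>"
    using lower by (intro mult_left_mono) auto
  finally show "(z - 1) * r powr (z - 1) * (z * rel_entropy q \<nu>) \<le> real q powr (z - 1) * power_excess q z \<nu>" .
qed

lemma energy_ratios_nonempty:
  assumes "q \<ge> 2" "z \<ge> 2"
  shows "energy_ratios q z \<noteq> {}"
proof -
  obtain \<nu> where \<nu>: "\<nu> \<in> prob_vectors q" "\<nu> \<noteq> uniform_vec q" "\<And>i. i < q \<Longrightarrow> 1 / 2 / real q \<le> \<nu> i"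
    by (rule perturbed_uniform[OF assms(1), of "1 / 2"]) auto
  then have "power_excess q z \<nu> > 0"
    using assms by (intro ratio_near_uniform(1)[of _ _ "1 / 2"]) auto
  with \<nu> show ?thesis unfolding energy_ratios_def by blast
qed

lemma crit_ratio_ge:
  assumes "q \<ge> 2" "z \<ge> 2"
  shows "1 / (z - 1) \<le> crit_ratio q z"
  unfolding crit_ratio_def
  using energy_ratios_nonempty[OF assms] energy_ratios_ge[of q z] assms by (intro cInf_greatest) auto

lemma crit_ratio_pos: "q \<ge> 2 \<Longrightarrow> z \<ge> 2 \<Longrightarrow> crit_ratio q z > 0"
  using crit_ratio_ge[of q z] by (smt (verit) divide_pos_pos)

lemma crit_ratio_le_spinodal:
  assumes "q \<ge> 2" "z \<ge> 2"
  shows "crit_ratio q z \<le> real q powr (z - 1) / (z - 1)"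
proof (rule field_le_mult_one_interval)
  fix s :: real
  assume s: "0 < s" "s < 1"
  define r where "r = s powr (1 / (z - 1))"
  have r: "0 < r" "r < 1" "r powr (z - 1) = s"
    using s assms powr_less_mono2[of "1 / (z - 1)" s 1] by (auto simp: r_def powr_powr)
  obtain \<nu> where \<nu>: "\<nu> \<in> prob_vectors q" "\<nu> \<noteq> uniform_vec q" "\<And>i. i < q \<Longrightarrow> r / real q \<le> \<nu> i"
    using perturbed_uniform[OF assms(1) r(1,2)] by blast
  have P: "power_excess q z \<nu> > 0"
    and ratio: "(z - 1) * s * (z * rel_entropy q \<nu>) \<le> real q powr (z - 1) * power_excess q z \<nu>"
    using ratio_near_uniform[OF \<nu>] assms r by auto
  have "s * crit_ratio q z \<le> s * (z * rel_entropy q \<nu> / power_excess q z \<nu>)"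
    using crit_ratio_le_ratio[OF _ assms(2) \<nu>(1) P] assms s by (intro mult_left_mono) auto
  also have "\<dots> \<le> real q powr (z - 1) / (z - 1)"
    using ratio P assms by (simp add: field_simps)
  finally show "s * crit_ratio q z \<le> real q powr (z - 1) / (z - 1)" .
qed

lemma crit_ratio_mult_le:
  assumes "q > 0" "z \<ge> 2" "\<nu> \<in> prob_vectors q"
  shows "crit_ratio q z * power_excess q z \<nu> \<le> z * rel_entropy q \<nu>"
proof (cases "power_excess q z \<nu> > 0")
  case True
  then show ?thesis
    using crit_ratio_le_ratio[OF assms True] by (simp add: field_simps)
next
  case False
  then have "power_excess q z \<nu> = 0"
    using power_excess_nonneg[OF assms(3,1,2)] by linarith
  moreover have "0 \<le> rel_entropy q \<nu>"
    using rel_entropy_ge_sqdist[OF assms(3,1)] sum_nonneg[of "{..<q}" "\<lambda>i. (\<nu> i - 1 / real q)^2"]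
    unfolding sqdist_uniform_def by simp
  ultimately show ?thesis using assms by simp
qed

lemma uniform_unique_min_below:
  assumes "q \<ge> 2" "z \<ge> 2" "0 \<le> \<beta>" "\<beta> < crit_ratio q z"
  shows "uniform_unique_min \<beta> q z"
  unfolding uniform_unique_min_def
proof (intro ballI impI)
  fix \<nu> assume \<nu>: "\<nu> \<in> prob_vectors q" "\<nu> \<noteq> uniform_vec q"
  have q: "q > 0" using assms by simp
  have "\<beta> * power_excess q z \<nu> < z * rel_entropy q \<nu>"
  proof (cases "power_excess q z \<nu> > 0")
    case True
    then have "\<beta> * power_excess q z \<nu> < crit_ratio q z * power_excess q z \<nu>"
      using assms by simp
    also have "\<dots> \<le> z * rel_entropy q \<nu>" by (rule crit_ratio_mult_le[OF q assms(2) \<nu>(1)])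
    finally show ?thesis .
  next
    case False
    then have "power_excess q z \<nu> = 0"
      using power_excess_nonneg[OF \<nu>(1) q assms(2)] by linarith
    then show ?thesis using rel_entropy_pos[OF \<nu>(1) q \<nu>(2)] assms(2) by simp
  qed
  then have "\<beta> / z * power_excess q z \<nu> < rel_entropy q \<nu>"
    using assms(2) by (simp add: field_simps)
  then show "Gamma \<beta> q z (uniform_vec q) < Gamma \<beta> q z \<nu>"
    using Gamma_minus_uniform[OF q, of \<beta> z \<nu>] by linarith
qed

lemma not_uniform_unique_min_above:
  assumes "q \<ge> 2" "z \<ge> 2" "\<beta> > crit_ratio q z"
  shows "\<not> uniform_unique_min \<beta> q z"
proof -
  have q: "q > 0" using assms by simp
  obtain x where "x \<in> energy_ratios q z" "x < \<beta>"
    using assms cInf_less_iff[OF energy_ratios_nonempty[OF assms(1,2)] bdd_below_energy_ratios[OF q assms(2)]]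
    unfolding crit_ratio_def by blast
  then obtain \<nu> where \<nu>: "\<nu> \<in> prob_vectors q" "power_excess q z \<nu> > 0"
      "z * rel_entropy q \<nu> / power_excess q z \<nu> < \<beta>"
    unfolding energy_ratios_def by blast
  then have "rel_entropy q \<nu> - \<beta> / z * power_excess q z \<nu> < 0"
    using assms(2) by (simp add: field_simps)
  then have "Gamma \<beta> q z \<nu> < Gamma \<beta> q z (uniform_vec q)"
    using Gamma_minus_uniform[OF q, of \<beta> z \<nu>] by linarith
  then show ?thesis
    using \<nu>(1) unfolding uniform_unique_min_def by force
qed

lemma threshold_unique:
  fixes b b' :: real
  assumes "\<forall>\<beta>. 0 \<le> \<beta> \<and> \<beta> < b \<longrightarrow> P \<beta>" "\<forall>\<beta>. \<beta> > b \<longrightarrow> \<not> P \<beta>"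
    and "\<forall>\<beta>. 0 \<le> \<beta> \<and> \<beta> < b' \<longrightarrow> P \<beta>" "\<forall>\<beta>. \<beta> > b' \<longrightarrow> \<not> P \<beta>"
    and "0 < b" "0 < b'"
  shows "b = b'"
  using assms(1-4)[rule_format, of "(b + b') / 2"] assms(5,6)
  by (cases b b' rule: linorder_cases) auto

lemma beta_c_eq_crit_ratio:
  assumes "q \<ge> 2" "z \<ge> 2"
  shows "beta_c q z = crit_ratio q z"
  unfolding beta_c_def
proof (rule the_equality)
  show "crit_ratio q z > 0 \<and> (\<forall>\<beta>. 0 \<le> \<beta> \<and> \<beta> < crit_ratio q z \<longrightarrow> uniform_unique_min \<beta> q z)
      \<and> (\<forall>\<beta>. \<beta> > crit_ratio q z \<longrightarrow> \<not> uniform_unique_min \<beta> q z)"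
    using crit_ratio_pos uniform_unique_min_below not_uniform_unique_min_above assms by blast
  then show "b = crit_ratio q z"
    if "b > 0 \<and> (\<forall>\<beta>. 0 \<le> \<beta> \<and> \<beta> < b \<longrightarrow> uniform_unique_min \<beta> q z)
      \<and> (\<forall>\<beta>. \<beta> > b \<longrightarrow> \<not> uniform_unique_min \<beta> q z)" for b
    using that threshold_unique[of b "\<lambda>\<beta>. uniform_unique_min \<beta> q z"] by blast
qed

section \<open>Splitting off the smallest coordinate\<close>

text \<open>The relative entropy and the power excess on \<open>q + 1\<close> states of the vector with \<open>q\<close> entries
  \<open>(1 - t) / q\<close> followed by one entry \<open>t\<close>.\<close>

definition block_entropy :: "nat \<Rightarrow> real \<Rightarrow> real" where
  "block_entropy q t = (1 - t) * ln ((real q + 1) * ((1 - t) / real q)) + t * ln ((real q + 1) * t)"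

definition block_power_excess :: "nat \<Rightarrow> real \<Rightarrow> real \<Rightarrow> real" where
  "block_power_excess q z t =
     real q * ((1 - t) / real q) powr z + t powr z - (real q + 1) * (1 / (real q + 1)) powr z"

lemma block_entropy_eq_entropy_gap:
  assumes "q > 0"
  shows "(real q + 1) * block_entropy q t
    = real q * entropy_gap ((real q + 1) * ((1 - t) / real q)) + entropy_gap ((real q + 1) * t)"
  using assms unfolding entropy_gap_def block_entropy_def by (simp add: field_simps)

lemma block_entropy_lower:
  assumes "q > 0" "0 \<le> t" "t \<le> 1 / (real q + 1)"
  shows "(real q + 2) / 2 * (1 / (real q + 1) - t)^2 \<le> block_entropy q t"
proof -
  define Q where "Q = real q"
  define d where "d = 1 / (Q + 1) - t"
  have Q: "Q \<ge> 1" "Q + 1 > 0" using assms(1) by (simp_all add: Q_def)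
  have t: "0 \<le> t" "(Q + 1) * t \<le> 1"
    using assms Q by (auto simp: Q_def field_simps)
  have Qd: "(Q + 1) * d = 1 - (Q + 1) * t"
    using Q by (simp add: d_def algebra_simps)
  have "((Q + 1) * t - 1)^2 / (2 * 1) \<le> entropy_gap ((Q + 1) * t)"
    using t Q by (intro entropy_gap_lower) auto
  moreover have "(Q + 1) * t - 1 = - ((Q + 1) * d)"
    unfolding Qd by simp
  ultimately have gap0: "(Q + 1)^2 * d^2 / 2 \<le> entropy_gap ((Q + 1) * t)"
    by (simp add: power_mult_distrib)
  have "((Q + 1) * ((1 - t) / Q) - 1)^2 / (2 * ((Q + 1) / Q)) \<le> entropy_gap ((Q + 1) * ((1 - t) / Q))"
    using t Q by (intro entropy_gap_lower) (auto simp: field_simps)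
  also have "(Q + 1) * ((1 - t) / Q) - 1 = (Q + 1) * d / Q"
    unfolding Qd using Q by (simp add: field_simps)
  also have "((Q + 1) * d / Q)^2 / (2 * ((Q + 1) / Q)) = (Q + 1) * d^2 / 2 / Q"
    using Q by (simp add: divide_simps power2_eq_square)
  finally have "(Q + 1) * d^2 / 2 \<le> Q * entropy_gap ((Q + 1) * ((1 - t) / Q))"
    using Q by (simp add: pos_divide_le_eq mult.commute)
  moreover have "(Q + 1) * ((Q + 2) / 2 * d^2) = (Q + 1)^2 * d^2 / 2 + (Q + 1) * d^2 / 2"
    by (simp add: power2_eq_square field_simps)
  ultimately have "(Q + 1) * ((Q + 2) / 2 * d^2) \<le> (Q + 1) * block_entropy q t"
    using gap0 block_entropy_eq_entropy_gap[OF assms(1), of t, folded Q_def] by linarith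
  then show ?thesis
    using Q by (simp add: Q_def d_def)
qed

lemma block_power_excess_eq_bregman:
  assumes "q > 0"
  shows "block_power_excess q z t
    = powr_bregman z (1 / (real q + 1)) t + real q * powr_bregman z (1 / (real q + 1)) ((1 - t) / real q)"
proof -
  define a where "a = 1 / (real q + 1)"
  define s where "s = (1 - t) / real q"
  have "(t - a) + real q * (s - a) = t + real q * s - (real q + 1) * a"
    by (simp add: algebra_simps)
  also have "\<dots> = 0"
    using assms by (simp add: a_def s_def)
  finally have "(t - a) + real q * (s - a) = 0" .
  then have "z * a powr (z - 1) * (t - a) + real q * (z * a powr (z - 1) * (s - a)) = 0"
    by (metis distrib_left mult.left_commute mult_zero_right)
  then show ?thesis
    unfolding block_power_excess_def powr_bregman_def a_def[symmetric] s_def[symmetric]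
    by (simp add: algebra_simps)
qed

lemma block_power_excess_upper:
  assumes "q > 0" "z \<ge> 2" "0 \<le> t" "t \<le> 1 / (real q + 1)"
  shows "block_power_excess q z t
    \<le> z * (z - 1) / 2 * (1 / real q) powr (z - 2) * ((real q + 1) / real q) * (1 / (real q + 1) - t)^2"
proof -
  define a where "a = 1 / (real q + 1)"
  define s where "s = (1 - t) / real q"
  define C where "C = z * (z - 1) / 2 * (1 / real q) powr (z - 2)"
  have a: "0 < a" "a \<le> 1 / real q" "t \<le> a"
    using assms by (auto simp: a_def field_simps)
  have s: "a \<le> s" "s \<le> 1 / real q" "s - a = (a - t) / real q"
    using assms by (auto simp: a_def s_def field_simps)
  have C: "0 \<le> C" using assms(2) by (simp add: C_def)
  have "powr_bregman z a t \<le> z * (z - 1) / 2 * max t a powr (z - 2) * (t - a)^2"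
    using a assms by (intro powr_bregman_upper) auto
  also have "\<dots> \<le> C * (a - t)^2"
    using a assms(2,3) unfolding C_def
    by (auto simp: max_def power2_commute intro!: mult_right_mono mult_left_mono powr_mono2)
  finally have bt: "powr_bregman z a t \<le> C * (a - t)^2" .
  have "powr_bregman z a s \<le> z * (z - 1) / 2 * max s a powr (z - 2) * (s - a)^2"
    using a s by (intro powr_bregman_upper assms(2)) auto
  also have "\<dots> \<le> C * (s - a)^2"
    using a s assms(2) unfolding C_def
    by (auto simp: max_def intro!: mult_right_mono mult_left_mono powr_mono2)
  finally have bs: "real q * powr_bregman z a s \<le> real q * (C * (s - a)^2)"
    by (simp add: mult_left_mono)
  have "C * (a - t)^2 + real q * (C * (s - a)^2) = C * ((real q + 1) / real q) * (a - t)^2"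
    unfolding s(3) using assms(1) by (simp add: field_simps power2_eq_square)
  then show ?thesis
    using bt bs unfolding block_power_excess_eq_bregman[OF assms(1)] a_def s_def C_def
    by linarith
qed

lemma block_power_excess_lower:
  assumes "q > 0" "z \<ge> 2" "0 \<le> t" "t \<le> 1 / (real q + 1)"
  shows "z * (z - 1) / (2 * real q) * (1 / (real q + 1)) powr (z - 2) * (1 / (real q + 1) - t)^2
    \<le> block_power_excess q z t"
proof -
  define a where "a = 1 / (real q + 1)"
  define s where "s = (1 - t) / real q"
  have a: "0 < a" and s: "a \<le> s" "s - a = (a - t) / real q"
    using assms by (auto simp: a_def s_def field_simps)
  have "z * (z - 1) / 2 * min s a powr (z - 2) * (s - a)^2 \<le> powr_bregman z a s"
    using a s by (intro powr_bregman_lower assms(2)) auto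
  then have "z * (z - 1) / 2 * a powr (z - 2) * (s - a)^2 \<le> powr_bregman z a s"
    using min_absorb2[OF s(1)] by simp
  then have "real q * (z * (z - 1) / 2 * a powr (z - 2) * (s - a)^2) \<le> real q * powr_bregman z a s"
    by (rule mult_left_mono) simp
  moreover have "real q * (z * (z - 1) / 2 * a powr (z - 2) * (s - a)^2)
      = z * (z - 1) / (2 * real q) * a powr (z - 2) * (a - t)^2"
    unfolding s(2) using assms(1) by (simp add: field_simps power2_eq_square)
  moreover have "0 \<le> powr_bregman z a t"
    using a assms by (intro powr_bregman_nonneg) auto
  ultimately show ?thesis
    unfolding block_power_excess_eq_bregman[OF assms(1)] a_def s_def by linarith
qed

definition block_ratio :: "nat \<Rightarrow> real \<Rightarrow> real" where
  "block_ratio q z = real q powr (z - 1) * (real q + 2) / ((z - 1) * (real q + 1))"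

lemma block_ratio_mult_le:
  assumes "q > 0" "z \<ge> 2" "0 \<le> t" "t \<le> 1 / (real q + 1)"
  shows "block_ratio q z * block_power_excess q z t \<le> z * block_entropy q t"
proof -
  define d where "d = 1 / (real q + 1) - t"
  have L: "block_ratio q z \<ge> 0"
    using assms(2) by (simp add: block_ratio_def)
  have q: "real q powr (z - 1) * (1 / real q) powr (z - 2) = real q"
    using assms(1) powr_add[of "real q" "z - 2" 1] by (simp add: powr_divide)
  have "block_ratio q z * block_power_excess q z t
      \<le> block_ratio q z * (z * (z - 1) / 2 * (1 / real q) powr (z - 2) * ((real q + 1) / real q) * d^2)"
    unfolding d_def using block_power_excess_upper[OF assms] L by (rule mult_left_mono)
  also have "\<dots> = (real q powr (z - 1) * (1 / real q) powr (z - 2)) * z * (real q + 2) / (2 * real q) * d^2"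
  proof -
    have "P * (Q + 2) / ((z - 1) * (Q + 1)) * (z * (z - 1) / 2 * B * ((Q + 1) / Q) * d^2)
        = (P * B) * z * (Q + 2) / (2 * Q) * d^2" if "Q > 0" for P B Q :: real
      using that assms(2) by (simp add: divide_simps)
    then show ?thesis using assms(1) unfolding block_ratio_def by simp
  qed
  also have "\<dots> = z * ((real q + 2) / 2 * d^2)"
    unfolding q using assms(1) by simp
  also have "\<dots> \<le> z * block_entropy q t"
    unfolding d_def using block_entropy_lower[OF assms(1,3,4)] assms(2) by (intro mult_left_mono) auto
  finally show ?thesis .
qed

lemma crit_ratio_less_block_ratio:
  assumes "q \<ge> 2" "z \<ge> 2"
  shows "crit_ratio q z < block_ratio q z"
proof -
  have "real q powr (z - 1) / (z - 1) * 1 < real q powr (z - 1) / (z - 1) * ((real q + 2) / (real q + 1))"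
    using assms by (intro mult_strict_left_mono) auto
  then show ?thesis
    using crit_ratio_le_spinodal[OF assms] by (simp add: block_ratio_def)
qed

definition conditioned_init :: "nat \<Rightarrow> (nat \<Rightarrow> real) \<Rightarrow> nat \<Rightarrow> real" where
  "conditioned_init q \<nu> = (\<lambda>i. if i < q then \<nu> i / (1 - \<nu> q) else 0)"

lemma conditioned_init_prob_vectors:
  assumes "\<nu> \<in> prob_vectors (Suc q)" "\<nu> q < 1"
  shows "conditioned_init q \<nu> \<in> prob_vectors q"
proof -
  have "(\<Sum>i<q. conditioned_init q \<nu> i) = (\<Sum>i<q. \<nu> i) / (1 - \<nu> q)"
    by (simp add: conditioned_init_def sum_divide_distrib)
  also have "(\<Sum>i<q. \<nu> i) = 1 - \<nu> q"
    using prob_vectors_sum[OF assms(1)] by simp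
  finally show ?thesis
    using assms prob_vectors_nonneg[OF assms(1)] by (auto simp: prob_vectors_def conditioned_init_def)
qed

lemma last_min_le:
  assumes "\<nu> \<in> prob_vectors (Suc q)" "\<And>i. i < Suc q \<Longrightarrow> \<nu> q \<le> \<nu> i"
  shows "\<nu> q \<le> 1 / (real q + 1)"
proof -
  have "(\<Sum>i<Suc q. \<nu> q) \<le> (\<Sum>i<Suc q. \<nu> i)"
    using assms(2) by (intro sum_mono) auto
  then show ?thesis
    using prob_vectors_sum[OF assms(1)] by (simp add: field_simps)
qed

lemma rel_entropy_Suc:
  assumes "\<nu> \<in> prob_vectors (Suc q)" "q > 0" "\<nu> q < 1"
  shows "rel_entropy (Suc q) \<nu> = block_entropy q (\<nu> q) + (1 - \<nu> q) * rel_entropy q (conditioned_init q \<nu>)"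
proof -
  define t \<mu> where "t = \<nu> q" and "\<mu> = conditioned_init q \<nu>"
  define c where "c = (real q + 1) * ((1 - t) / real q)"
  have c: "c > 0" using assms by (simp add: c_def t_def)
  have \<nu>: "\<nu> i = (1 - t) * \<mu> i" if "i < q" for i
    using that assms(3) by (simp add: \<mu>_def t_def conditioned_init_def)
  have summand: "\<nu> i * ln ((real q + 1) * \<nu> i) = (1 - t) * ln c * \<mu> i + (1 - t) * (\<mu> i * ln (real q * \<mu> i))"
    if "i < q" for i
  proof (cases "\<mu> i = 0")
    case True
    then show ?thesis using \<nu>[OF that] by simp
  next
    case False
    then have "\<mu> i > 0"
      using prob_vectors_nonneg[OF conditioned_init_prob_vectors[OF assms(1,3)], of i] by (simp add: \<mu>_def)
    moreover have "(real q + 1) * \<nu> i = c * (real q * \<mu> i)"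
      using \<nu>[OF that] assms(2) by (simp add: c_def)
    ultimately have "ln ((real q + 1) * \<nu> i) = ln c + ln (real q * \<mu> i)"
      using c assms(2) by (simp add: ln_mult)
    then have "\<nu> i * ln ((real q + 1) * \<nu> i) = ((1 - t) * \<mu> i) * (ln c + ln (real q * \<mu> i))"
      using \<nu>[OF that] by simp
    then show ?thesis by (simp add: algebra_simps)
  qed
  have "rel_entropy (Suc q) \<nu> = (\<Sum>i<q. \<nu> i * ln ((real q + 1) * \<nu> i)) + t * ln ((real q + 1) * t)"
    by (simp add: rel_entropy_def t_def add.commute)
  also have "(\<Sum>i<q. \<nu> i * ln ((real q + 1) * \<nu> i)) = (1 - t) * ln c * (\<Sum>i<q. \<mu> i) + (1 - t) * rel_entropy q \<mu>"
    using summand by (simp add: rel_entropy_def sum.distrib sum_distrib_left)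
  also have "(\<Sum>i<q. \<mu> i) = 1"
    using prob_vectors_sum[OF conditioned_init_prob_vectors[OF assms(1,3)]] by (simp add: \<mu>_def)
  finally show ?thesis
    by (simp add: block_entropy_def c_def t_def \<mu>_def)
qed

lemma power_excess_Suc:
  assumes "\<nu> \<in> prob_vectors (Suc q)" "q > 0" "\<nu> q < 1"
  shows "power_excess (Suc q) z \<nu>
    = block_power_excess q z (\<nu> q) + (1 - \<nu> q) powr z * power_excess q z (conditioned_init q \<nu>)"
proof -
  define t \<mu> where "t = \<nu> q" and "\<mu> = conditioned_init q \<nu>"
  have "\<nu> i powr z = (1 - t) powr z * \<mu> i powr z" if "i < q" for i
    using that assms(3) prob_vectors_nonneg[OF assms(1), of i]
    by (simp add: \<mu>_def t_def conditioned_init_def powr_divide)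
  then have "(\<Sum>i<q. \<nu> i powr z) = (1 - t) powr z * (\<Sum>i<q. \<mu> i powr z)"
    by (simp add: sum_distrib_left)
  moreover have "(1 - t) powr z * (real q * (1 / real q) powr z) = real q * ((1 - t) / real q) powr z"
    using assms(3) by (simp add: t_def powr_divide)
  ultimately have "(1 - t) powr z * power_excess q z \<mu> = (\<Sum>i<q. \<nu> i powr z) - real q * ((1 - t) / real q) powr z"
    unfolding power_excess_def right_diff_distrib by simp
  moreover have "power_excess (Suc q) z \<nu> = (\<Sum>i<q. \<nu> i powr z) + t powr z - (real q + 1) * (1 / (real q + 1)) powr z"
    by (simp add: power_excess_def t_def add.commute)
  ultimately show ?thesis
    unfolding block_power_excess_def t_def[symmetric] \<mu>_def[symmetric] by simp
qed

text \<open>Here \<open>g, h\<close> stand for the block power excess and entropy, \<open>D, K\<close> for those of the conditioned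
  vector, and \<open>L, B\<close> for the block and critical ratios. Either \<open>B t \<ge> \<epsilon>\<close> and the extra factor
  \<open>1 - t\<close> in front of \<open>D\<close> pays for \<open>\<epsilon>\<close>, or \<open>t < a / 2\<close>, the block vector is far from uniform, and
  the gap \<open>L - B\<close> on \<open>g\<close> pays for it.\<close>

lemma margin_inequality:
  fixes B L \<epsilon> \<kappa> a t g h D K z :: real
  assumes "0 < B" "0 < \<epsilon>" "\<epsilon> \<le> (L - B) / 2" "\<epsilon> \<le> B * a / 2" "\<epsilon> \<le> (L - B) * \<kappa> * a^2 / 8"
    and "0 \<le> \<kappa>" "0 \<le> t" "t \<le> 1" "\<kappa> * (a - t)^2 \<le> g" "L * g \<le> z * h"
    and "0 \<le> D" "D \<le> 1" "B * D \<le> z * K"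
  shows "(B + \<epsilon>) * (g + (1 - t)^2 * D) \<le> z * h + (1 - t) * (z * K)"
proof -
  define W where "W = (1 - t) * D"
  have W: "0 \<le> W" "W \<le> 1"
    using assms(7,8,11,12) by (auto simp: W_def intro: mult_le_one)
  have g: "0 \<le> g"
    using assms(6,9) order_trans[OF mult_nonneg_nonneg[OF assms(6) zero_le_power2]] by blast
  have key: "0 \<le> (L - B - \<epsilon>) * g + W * (B * t - \<epsilon>)"
  proof (cases "B * t \<ge> \<epsilon>")
    case True
    then show ?thesis using assms(2,3) g W by simp
  next
    case False
    then have "B * t < B * (a / 2)" using assms(4) by simp
    then have "t < a / 2" using assms(1) by simp
    then have "(a / 2)^2 \<le> (a - t)^2" using assms(7) by (intro power_mono) auto
    then have "\<kappa> * (a / 2)^2 \<le> g"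
      using assms(6,9) mult_left_mono by fastforce
    then have "(L - B) / 2 * (\<kappa> * (a / 2)^2) \<le> (L - B - \<epsilon>) * g"
      using assms(2,3,6) by (intro mult_mono) auto
    moreover have "(L - B) / 2 * (\<kappa> * (a / 2)^2) = (L - B) * \<kappa> * a^2 / 8"
      by (simp add: power2_eq_square)
    moreover have "W * (\<epsilon> - B * t) \<le> \<epsilon> - B * t"
      using W False by (intro mult_left_le_one_le) auto
    moreover have "W * (B * t - \<epsilon>) = - (W * (\<epsilon> - B * t))"
      by (simp add: algebra_simps)
    ultimately show ?thesis
      using assms(1,5,7) by (smt (verit) mult_nonneg_nonneg)
  qed
  have "(B + \<epsilon>) * (g + (1 - t)^2 * D) = L * g - ((L - B - \<epsilon>) * g + W * (B * t - \<epsilon>)) + W * B - W * (\<epsilon> * t)"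
    by (simp add: W_def power2_eq_square algebra_simps)
  moreover have "W * B \<le> (1 - t) * (z * K)"
    using assms(8,13) mult_left_mono[of "B * D" "z * K" "1 - t"] by (simp add: W_def mult_ac)
  moreover have "0 \<le> W * (\<epsilon> * t)"
    using W assms(2,7) by simp
  ultimately show ?thesis
    using key assms(10) by linarith
qed

section \<open>A uniform gap between consecutive critical ratios\<close>

definition step_margin :: "nat \<Rightarrow> real \<Rightarrow> real" where
  "step_margin q z =
    (let B = crit_ratio q z; L = block_ratio q z; a = 1 / (real q + 1);
         \<kappa> = z * (z - 1) / (2 * real q) * a powr (z - 2)
     in min (min ((L - B) / 2) (B * a / 2)) ((L - B) * \<kappa> * a^2 / 8))"

lemma step_margin_pos:
  assumes "q \<ge> 2" "z \<ge> 2"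
  shows "step_margin q z > 0"
  using crit_ratio_less_block_ratio[OF assms] crit_ratio_pos[OF assms] assms
  by (simp add: step_margin_def Let_def)

lemma crit_ratio_margin_block:
  assumes q: "q \<ge> 2" and z: "z \<ge> 2" and \<mu>: "\<mu> \<in> prob_vectors q"
    and t: "0 \<le> t" "t \<le> 1 / (real q + 1)"
  shows "(crit_ratio q z + step_margin q z) * (block_power_excess q z t + (1 - t)^2 * power_excess q z \<mu>)
    \<le> z * block_entropy q t + (1 - t) * (z * rel_entropy q \<mu>)"
proof -
  define B \<epsilon> where "B = crit_ratio q z" and "\<epsilon> = step_margin q z"
  have q0: "q > 0" using q by simp
  have "t \<le> 1" using t(2) q0 by (smt (verit) divide_le_eq_1 of_nat_0_le_iff)
  have "(B + \<epsilon>) * (block_power_excess q z t + (1 - t)^2 * power_excess q z \<mu>)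
      \<le> z * block_entropy q t + (1 - t) * (z * rel_entropy q \<mu>)"
  proof (rule margin_inequality)
    show "0 < B" using crit_ratio_pos[OF q z] by (simp add: B_def)
    show "0 < \<epsilon>" using step_margin_pos[OF q z] by (simp add: \<epsilon>_def)
    show "\<epsilon> \<le> (block_ratio q z - B) / 2" "\<epsilon> \<le> B * (1 / (real q + 1)) / 2"
      and "\<epsilon> \<le> (block_ratio q z - B) * (z * (z - 1) / (2 * real q) * (1 / (real q + 1)) powr (z - 2))
             * (1 / (real q + 1))^2 / 8"
      unfolding \<epsilon>_def B_def step_margin_def Let_def by (meson min.cobounded1 min.cobounded2 order_trans)+
    show "z * (z - 1) / (2 * real q) * (1 / (real q + 1)) powr (z - 2) * (1 / (real q + 1) - t)^2
        \<le> block_power_excess q z t"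
      by (rule block_power_excess_lower[OF q0 z t])
    show "block_ratio q z * block_power_excess q z t \<le> z * block_entropy q t"
      by (rule block_ratio_mult_le[OF q0 z t])
    show "B * power_excess q z \<mu> \<le> z * rel_entropy q \<mu>"
      unfolding B_def by (rule crit_ratio_mult_le[OF q0 z \<mu>])
  qed (use z t \<open>t \<le> 1\<close> power_excess_nonneg[OF \<mu> q0 z] power_excess_le_one[OF \<mu> z] in auto)
  then show ?thesis by (simp add: B_def \<epsilon>_def)
qed

lemma crit_ratio_margin_sorted:
  assumes q: "q \<ge> 2" and z: "z \<ge> 2" and \<nu>: "\<nu> \<in> prob_vectors (Suc q)"
    and last_min: "\<And>i. i < Suc q \<Longrightarrow> \<nu> q \<le> \<nu> i"
  shows "(crit_ratio q z + step_margin q z) * power_excess (Suc q) z \<nu> \<le> z * rel_entropy (Suc q) \<nu>"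
proof -
  define t \<mu> where "t = \<nu> q" and "\<mu> = conditioned_init q \<nu>"
  define C where "C = crit_ratio q z + step_margin q z"
  have q0: "q > 0" using q by simp
  have t: "0 \<le> t" "t \<le> 1 / (real q + 1)"
    using prob_vectors_nonneg[OF \<nu>] last_min_le[OF \<nu> last_min] by (simp_all add: t_def)
  moreover have "1 / (real q + 1) < 1" using q0 by simp
  ultimately have t1: "t < 1" by linarith
  have \<mu>: "\<mu> \<in> prob_vectors q"
    using conditioned_init_prob_vectors[OF \<nu>] t1 by (simp add: \<mu>_def t_def)
  have C: "C > 0"
    using crit_ratio_pos[OF q z] step_margin_pos[OF q z] by (simp add: C_def)
  have "(1 - t) powr z \<le> (1 - t) powr 2"
    using t t1 z by (intro powr_mono') auto
  then have "(1 - t) powr z \<le> (1 - t)^2"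
    using t1 by (simp add: powr_numeral)
  then have "C * power_excess (Suc q) z \<nu> \<le> C * (block_power_excess q z t + (1 - t)^2 * power_excess q z \<mu>)"
    unfolding power_excess_Suc[OF \<nu> q0 t1[unfolded t_def]] t_def[symmetric] \<mu>_def[symmetric]
    using C power_excess_nonneg[OF \<mu> q0 z] by (intro mult_left_mono add_left_mono mult_right_mono) auto
  also have "\<dots> \<le> z * block_entropy q t + (1 - t) * (z * rel_entropy q \<mu>)"
    unfolding C_def by (rule crit_ratio_margin_block[OF q z \<mu> t])
  also have "\<dots> = z * rel_entropy (Suc q) \<nu>"
    unfolding rel_entropy_Suc[OF \<nu> q0 t1[unfolded t_def]] by (simp add: algebra_simps t_def \<mu>_def)
  finally show ?thesis unfolding C_def .
qed

lemma prob_vectors_permute: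
  assumes "\<sigma> permutes {..<n}" "\<nu> \<in> prob_vectors n"
  shows "\<nu> \<circ> \<sigma> \<in> prob_vectors n"
proof -
  have "(\<Sum>i<n. (\<nu> \<circ> \<sigma>) i) = 1"
    using sum.permute[OF assms(1), of \<nu>] prob_vectors_sum[OF assms(2)] by simp
  moreover have "\<sigma> i = i" if "i \<ge> n" for i
    using permutes_not_in[OF assms(1)] that by simp
  ultimately show ?thesis
    using assms(2) prob_vectors_nonneg[OF assms(2)] by (auto simp: prob_vectors_def)
qed

lemma rel_entropy_permute:
  "\<sigma> permutes {..<n} \<Longrightarrow> rel_entropy n (\<nu> \<circ> \<sigma>) = rel_entropy n \<nu>"
  unfolding rel_entropy_def using sum.permute[of \<sigma> "{..<n}" "\<lambda>i. \<nu> i * ln (real n * \<nu> i)"]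
  by (simp add: comp_def)

lemma power_excess_permute:
  "\<sigma> permutes {..<n} \<Longrightarrow> power_excess n z (\<nu> \<circ> \<sigma>) = power_excess n z \<nu>"
  unfolding power_excess_def using sum.permute[of \<sigma> "{..<n}" "\<lambda>i. \<nu> i powr z"]
  by (simp add: comp_def)

lemma crit_ratio_margin:
  assumes q: "q \<ge> 2" and z: "z \<ge> 2" and \<nu>: "\<nu> \<in> prob_vectors (Suc q)"
  shows "(crit_ratio q z + step_margin q z) * power_excess (Suc q) z \<nu> \<le> z * rel_entropy (Suc q) \<nu>"
proof -
  obtain j where j: "j < Suc q" "\<And>i. i < Suc q \<Longrightarrow> \<nu> j \<le> \<nu> i"
  proof -
    have "Min (\<nu> ` {..<Suc q}) \<in> \<nu> ` {..<Suc q}"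
      by (intro Min_in) auto
    then obtain j where "j < Suc q" "\<nu> j = Min (\<nu> ` {..<Suc q})"
      by auto
    then show thesis by (intro that[of j]) auto
  qed
  define \<sigma> where "\<sigma> = Transposition.transpose j q"
  have \<sigma>: "\<sigma> permutes {..<Suc q}"
    unfolding \<sigma>_def using j(1) by (intro permutes_swap_id) auto
  have "(\<nu> \<circ> \<sigma>) q \<le> (\<nu> \<circ> \<sigma>) i" if "i < Suc q" for i
    using j permutes_in_image[OF \<sigma>] that by (simp add: \<sigma>_def)
  then show ?thesis
    using crit_ratio_margin_sorted[OF q z prob_vectors_permute[OF \<sigma> \<nu>]]
    by (simp add: rel_entropy_permute[OF \<sigma>] power_excess_permute[OF \<sigma>])
qed

lemma crit_ratio_less_Suc:
  assumes q: "q \<ge> 2" and z: "z \<ge> 2"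
  shows "crit_ratio q z < crit_ratio (Suc q) z"
proof -
  have "crit_ratio q z + step_margin q z \<le> crit_ratio (Suc q) z"
    unfolding crit_ratio_def[of "Suc q"]
  proof (rule cInf_greatest)
    show "energy_ratios (Suc q) z \<noteq> {}"
      using energy_ratios_nonempty q z by simp
    fix x assume "x \<in> energy_ratios (Suc q) z"
    then obtain \<nu> where \<nu>: "\<nu> \<in> prob_vectors (Suc q)" "power_excess (Suc q) z \<nu> > 0"
        "x = z * rel_entropy (Suc q) \<nu> / power_excess (Suc q) z \<nu>"
      unfolding energy_ratios_def by blast
    show "crit_ratio q z + step_margin q z \<le> x"
      unfolding \<nu>(3) using crit_ratio_margin[OF q z \<nu>(1)] \<nu>(2) by (simp add: pos_le_divide_eq)
  qed
  then show ?thesis using step_margin_pos[OF q z] by linarith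
qed

lemma strict_mono_on_crit_ratio:
  assumes "z \<ge> 2"
  shows "strict_mono_on {2..} (\<lambda>q. crit_ratio q z)"
proof (rule strict_mono_onI)
  fix r s :: nat
  assume r: "r \<in> {2..}" and "r < s"
  then have "Suc r \<le> s" by simp
  then show "crit_ratio r z < crit_ratio s z"
  proof (induction s rule: dec_induct)
    case base
    show ?case using r crit_ratio_less_Suc assms by simp
  next
    case (step n)
    then show ?case using r crit_ratio_less_Suc[of n z] assms by simp
  qed
qed

theorem proposition2p2:
  fixes z :: real
  assumes "z \<ge> 2"
  shows "strict_mono_on {2..} (\<lambda>q::nat. beta_c q z)"
proof (rule strict_mono_onI)
  fix r s :: nat
  assume "r \<in> {2..}" "s \<in> {2..}" "r < s"
  then show "beta_c r z < beta_c s z"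
    using strict_mono_onD[OF strict_mono_on_crit_ratio[OF assms]] beta_c_eq_crit_ratio assms by auto
qed

end
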